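(* Let $n\geq 1$ and $k\geq 1$ be integers with $k\not\equiv 1 \pmod 3$. Then $\gcd(C_{k,n},C_{k,n+1})=1$.
   Context: For an integer $k\geq 1$, the generalized balancing-Lucas numbers are defined by $C_{k,0}=1$, $C_{k,1}=3$ and $C_{k,n}=3kC_{k,n-1}+(1-k)C_{k,n-2}$ for $n\geq 2$. *)

theory Defs
  imports Main
begin

fun balLucas :: "int \<Rightarrow> nat \<Rightarrow> int" where
  "balLucas k 0 = 1"
| "balLucas k (Suc 0) = 3"
| "balLucas k (Suc (Suc n)) = 3 * k * balLucas k (Suc n) + (1 - k) * balLucas k n"

end

theory Submission
  imports Defs "HOL-Number_Theory.Cong"
begin

text \<open>Modulo \<open>k - 1\<close> the recurrence reads \<open>C n \<equiv> 3 C (n - 1)\<close>, so \<open>C n \<equiv> 3 ^ n\<close>. Hence if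
  \<open>3\<close> does not divide \<open>k - 1\<close>, every \<open>C n\<close> is coprime to the coefficient \<open>1 - k\<close>, and a
  common divisor of \<open>C (n + 1)\<close> and \<open>C (n + 2)\<close> divides \<open>C n\<close>; induction descends to
  \<open>gcd (C 0) (C 1) = gcd 1 3 = 1\<close>.\<close>

lemma coprime_consecutive_if_linear_recurrence:
  fixes u :: "nat \<Rightarrow> 'a::ring_gcd"
  assumes rec: "\<And>n. u (Suc (Suc n)) = a * u (Suc n) + b * u n"
    and coprime_start: "coprime (u 0) (u 1)"
    and coprime_coeff: "\<And>n. coprime (u (Suc n)) b"
  shows "coprime (u n) (u (Suc n))"
proof (induction n)
  case 0
  show ?case using coprime_start by simp
next
  case (Suc n)
  have "coprime (u (Suc n)) (b * u n)"
    using coprime_coeff Suc.IH by (simp add: coprime_commute)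
  then show ?case
    by (simp add: rec coprime_iff_gcd_eq_1 gcd_add_mult)
qed

lemma balLucas_cong_power: "[balLucas k n = 3 ^ n] (mod k - 1)"
proof (induction k n rule: balLucas.induct)
  case (3 k n)
  have "balLucas k (Suc (Suc n)) - 3 ^ Suc (Suc n) =
        3 * (balLucas k (Suc n) - 3 ^ Suc n) + (k - 1) * (3 * balLucas k (Suc n) - balLucas k n)"
    by (simp add: algebra_simps)
  with "3.IH" show ?case
    unfolding cong_iff_dvd_diff by (metis dvd_add dvd_mult dvd_triv_left)
qed simp_all

lemma coprime_balLucas_one_minus:
  fixes k :: int
  assumes "k mod 3 \<noteq> 1"
  shows "coprime (balLucas k n) (1 - k)"
proof -
  have "\<not> 3 dvd k - 1"
    using assms by presburger
  then have "coprime (3 ^ n) (k - 1)"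
    by (simp add: prime_imp_coprime)
  then have "coprime (balLucas k n) (k - 1)"
    using balLucas_cong_power coprime_cong_cong_left by blast
  then show ?thesis
    by (metis coprime_minus_right_iff minus_diff_eq)
qed

theorem mainTheorem12:
  fixes k :: int and n :: nat
  assumes "n \<ge> 1" and "k \<ge> 1" and "k mod 3 \<noteq> 1"
  shows "gcd (balLucas k n) (balLucas k (Suc n)) = 1"
proof -
  have "coprime (balLucas k n) (balLucas k (Suc n))"
    by (rule coprime_consecutive_if_linear_recurrence[where a = "3 * k" and b = "1 - k"])
       (simp_all add: coprime_balLucas_one_minus[OF assms(3)])
  then show ?thesis
    by (simp add: coprime_iff_gcd_eq_1)
qed

end
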